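(* Let $n\ge 3$, $0<m<\frac{n-2}{n}$, $m\ne\frac{n-2}{n+2}$, $\beta>0$, $\lambda>0$. Let $v$ be the radially symmetric solution described in the context, $w(s)=r^2v(r)^{1-m}$ with $s=\log r$, and $h(s)=w(s)-\frac{2(n-1)(n-2-nm)}{(1-m)\beta}s$. Then \[ \lim_{s\to\infty}\frac{h(s)}{\log s}=\lim_{s\to\infty}s\,h_s(s)=-\frac{(n-1)[n-2-(n+2)m]}{(1-m)\beta}. \]
   Context: $v=v(r)$, $r=|x|$, is the unique radially symmetric positive classical solution of $\frac{n-1}{m}\Delta v^m+\frac{2\beta}{1-m}v+\beta x\cdot\nabla v=0$ in $\mathbb{R}^n$ with $v(0)=\lambda$. *)

theory Defs
  imports "HOL-Analysis.Analysis"
begin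

definition partial :: "'n::finite \<Rightarrow> (real^'n \<Rightarrow> real) \<Rightarrow> real^'n \<Rightarrow> real" where
  "partial i f x = frechet_derivative f (at x) (axis i 1)"

definition C2_UNIV :: "(real^'n::finite \<Rightarrow> real) \<Rightarrow> bool" where
  "C2_UNIV f \<longleftrightarrow> (\<forall>x. f differentiable (at x)) \<and>
     (\<forall>i x. (partial i f) differentiable (at x)) \<and>
     (\<forall>i j. continuous_on UNIV (partial j (partial i f)))"

definition laplacian :: "(real^'n::finite \<Rightarrow> real) \<Rightarrow> real^'n \<Rightarrow> real" where
  "laplacian f x = (\<Sum>i\<in>UNIV. partial i (partial i f) x)"

definition radial_deriv :: "(real^'n::finite \<Rightarrow> real) \<Rightarrow> real^'n \<Rightarrow> real" where
  "radial_deriv f x = (\<Sum>i\<in>UNIV. x $ i * partial i f x)"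

end

theory Submission
  imports Defs
begin

text \<open>With \<open>r = e\<^sup>s\<close>, the profile equation becomes an autonomous system for
  \<open>w = r\<^sup>2 v\<^bsup>1-m\<^esup>\<close> and \<open>a = w' / w = 2 + (1 - m) r v' / v\<close>:
  \<open>w' = w a\<close>, \<open>a' = - \<mu> (a - 2)\<^sup>2 - (n - 2) (a - 2) - c w a\<close> with \<open>\<mu> = m / (1 - m)\<close> and
  \<open>c = \<beta> / (n - 1)\<close>. Integrating the equation against \<open>r\<^bsup>n-1\<^esup>\<close> from \<open>0\<close> shows that the flux
  \<open>(n - 1) r\<^bsup>n-1\<^esup> v\<^bsup>m-1\<^esup> v' + \<beta> r\<^sup>n v\<close> is positive, i.e. \<open>c w > (1 + \<mu>) (2 - a)\<close>.
  Hence \<open>a\<close> is eventually nonnegative, \<open>w\<close> increases to infinity and \<open>a \<rightarrow> 0\<close>. Then \<open>P = w a\<close>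
  and \<open>w (P - A)\<close>, where \<open>A = (2 (n - 2) - 4 \<mu>) / c\<close>, both satisfy relaxation equations
  \<open>y' = w (\<psi> - c y)\<close> with convergent \<open>\<psi>\<close>, which yields \<open>P \<rightarrow> A\<close> and
  \<open>s (P - A) \<rightarrow> - (n - 2 - 4 \<mu>) / c\<close>. As \<open>h' = P - A\<close>, both limits follow, the first one by
  l'Hospital's rule.\<close>

section \<open>Radial functions on \<open>\<real>\<^sup>n\<close>\<close>

lemma has_derivative_radial:
  fixes x :: "real^'n::finite" and \<phi> :: "real \<Rightarrow> real"
  assumes x: "x \<noteq> 0" and d: "(\<phi> has_real_derivative d) (at (norm x))"
  shows "((\<lambda>y. \<phi> (norm y)) has_derivative (\<lambda>h. d * (h \<bullet> sgn x))) (at x)"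
  using has_derivative_compose[OF has_derivative_norm[OF x], of \<phi> "(*) d"] d
  by (simp add: has_field_derivative_def)

lemma inner_axis_sgn:
  fixes x :: "real^'n::finite"
  shows "axis i 1 \<bullet> sgn x = x $ i / norm x"
  by (simp add: sgn_div_norm inner_axis' divide_inverse mult.commute)

lemma sum_vec_nth_squares:
  fixes x :: "real^'n::finite"
  shows "(\<Sum>i\<in>UNIV. x $ i * x $ i) = (norm x)\<^sup>2"
  unfolding power2_norm_eq_inner inner_vec_def by simp

lemma partial_radial:
  fixes x :: "real^'n::finite" and \<phi> :: "real \<Rightarrow> real"
  assumes x: "x \<noteq> 0" and d: "(\<phi> has_real_derivative d) (at (norm x))"
  shows "partial i (\<lambda>y. \<phi> (norm y)) x = d * x $ i / norm x"
  using frechet_derivative_at[OF has_derivative_radial[OF x d], symmetric]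
  by (simp add: partial_def inner_axis_sgn)

lemma has_derivative_radial_times_component:
  fixes x :: "real^'n::finite" and \<psi> :: "real \<Rightarrow> real"
  assumes x: "x \<noteq> 0" and d: "(\<psi> has_real_derivative d) (at (norm x))"
  shows "((\<lambda>y. \<psi> (norm y) * y $ i / norm y) has_derivative
     (\<lambda>h. d * (h \<bullet> sgn x) * x $ i / norm x + \<psi> (norm x) * h $ i / norm x
          - \<psi> (norm x) * x $ i * (h \<bullet> sgn x) / (norm x)\<^sup>2)) (at x)"
proof -
  have nx: "norm x \<noteq> 0" using x by simp
  have component: "((\<lambda>y. y $ i) has_derivative (\<lambda>h. h $ i)) (at x)"
    by (rule bounded_linear_imp_has_derivative) (rule bounded_linear_vec_nth)
  have inverse_norm: "((\<lambda>y. inverse (norm y)) has_derivative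
      (\<lambda>h. - (inverse (norm x) * (h \<bullet> sgn x) * inverse (norm x)))) (at x)"
    by (rule Deriv.has_derivative_inverse[OF nx has_derivative_norm[OF x], simplified])
  have "((\<lambda>y. \<psi> (norm y) * y $ i * inverse (norm y)) has_derivative
     (\<lambda>h. (\<psi> (norm x) * x $ i) * (- (inverse (norm x) * (h \<bullet> sgn x) * inverse (norm x)))
        + (\<psi> (norm x) * h $ i + d * (h \<bullet> sgn x) * x $ i) * inverse (norm x))) (at x)"
    by (rule has_derivative_mult[OF has_derivative_mult[OF has_derivative_radial[OF x d] component]
          inverse_norm])
  moreover have "(\<lambda>h. (\<psi> (norm x) * x $ i) * (- (inverse (norm x) * (h \<bullet> sgn x) * inverse (norm x)))
        + (\<psi> (norm x) * h $ i + d * (h \<bullet> sgn x) * x $ i) * inverse (norm x))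
     = (\<lambda>h. d * (h \<bullet> sgn x) * x $ i / norm x + \<psi> (norm x) * h $ i / norm x
          - \<psi> (norm x) * x $ i * (h \<bullet> sgn x) / (norm x)\<^sup>2)"
    using nx by (intro ext) (simp add: field_simps power2_eq_square)
  ultimately show ?thesis by (simp add: divide_inverse)
qed

lemma partial_partial_radial:
  fixes x :: "real^'n::finite" and \<phi> \<phi>' :: "real \<Rightarrow> real"
  assumes x: "x \<noteq> 0" and d1: "\<And>t. t > 0 \<Longrightarrow> (\<phi> has_real_derivative \<phi>' t) (at t)"
    and d2: "(\<phi>' has_real_derivative d) (at (norm x))"
  shows "partial i (partial i (\<lambda>y. \<phi> (norm y))) x
     = d * (x $ i * x $ i) / (norm x)\<^sup>2 + \<phi>' (norm x) / norm x
       - \<phi>' (norm x) * (x $ i * x $ i) / (norm x)^3"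
proof -
  have "partial i (\<lambda>y. \<phi> (norm y)) y = \<phi>' (norm y) * y $ i / norm y" if "y \<in> - {0}" for y
    using that by (intro partial_radial) (auto intro: d1)
  then have "(partial i (\<lambda>y. \<phi> (norm y)) has_derivative
     (\<lambda>h. d * (h \<bullet> sgn x) * x $ i / norm x + \<phi>' (norm x) * h $ i / norm x
          - \<phi>' (norm x) * x $ i * (h \<bullet> sgn x) / (norm x)\<^sup>2)) (at x)"
    using x by (intro has_derivative_transform_within_open[OF
          has_derivative_radial_times_component[OF x d2], of "-{0}"]) auto
  from frechet_derivative_at[OF this, symmetric]
  have "partial i (partial i (\<lambda>y. \<phi> (norm y))) x
      = d * (axis i 1 \<bullet> sgn x) * x $ i / norm x + \<phi>' (norm x) * (axis i 1::real^'n) $ i / norm x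
        - \<phi>' (norm x) * x $ i * (axis i 1 \<bullet> sgn x) / (norm x)\<^sup>2"
    unfolding partial_def[of i "partial i (\<lambda>y. \<phi> (norm y))" x] by simp
  with x show ?thesis
    by (simp add: inner_axis_sgn field_simps power2_eq_square power3_eq_cube)
qed

lemma laplacian_radial:
  fixes x :: "real^'n::finite" and \<phi> \<phi>' :: "real \<Rightarrow> real"
  assumes x: "x \<noteq> 0" and d1: "\<And>t. t > 0 \<Longrightarrow> (\<phi> has_real_derivative \<phi>' t) (at t)"
    and d2: "(\<phi>' has_real_derivative d) (at (norm x))"
  shows "laplacian (\<lambda>y. \<phi> (norm y)) x = d + (real CARD('n) - 1) / norm x * \<phi>' (norm x)"
proof -
  have nx: "norm x > 0" using x by simp
  have "laplacian (\<lambda>y. \<phi> (norm y)) x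
      = (\<Sum>i\<in>UNIV. d * (x $ i * x $ i) / (norm x)\<^sup>2 + \<phi>' (norm x) / norm x
                     - \<phi>' (norm x) * (x $ i * x $ i) / (norm x)^3)"
    unfolding laplacian_def using partial_partial_radial[OF x d1 d2] by simp
  also have "\<dots> = d * (\<Sum>i\<in>UNIV. x $ i * x $ i) / (norm x)\<^sup>2 + real CARD('n) * (\<phi>' (norm x) / norm x)
                  - \<phi>' (norm x) * (\<Sum>i\<in>UNIV. x $ i * x $ i) / (norm x)^3"
    by (simp add: sum_subtractf sum.distrib sum_divide_distrib[symmetric] sum_distrib_left)
  also have "\<dots> = d + (real CARD('n) - 1) / norm x * \<phi>' (norm x)"
    unfolding sum_vec_nth_squares using nx by (simp add: field_simps power2_eq_square power3_eq_cube)
  finally show ?thesis .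
qed

lemma radial_deriv_radial:
  fixes x :: "real^'n::finite" and \<phi> :: "real \<Rightarrow> real"
  assumes x: "x \<noteq> 0" and d: "(\<phi> has_real_derivative d) (at (norm x))"
  shows "radial_deriv (\<lambda>y. \<phi> (norm y)) x = norm x * d"
proof -
  have "radial_deriv (\<lambda>y. \<phi> (norm y)) x = (\<Sum>i\<in>UNIV. (x $ i * x $ i) * (d / norm x))"
    unfolding radial_deriv_def using partial_radial[OF x d] by (simp add: field_simps)
  also have "\<dots> = norm x * d"
    unfolding sum_distrib_right[symmetric] sum_vec_nth_squares using x
    by (simp add: field_simps power2_eq_square)
  finally show ?thesis .
qed

lemma DERIV_frechet_derivative_along_line:
  fixes g :: "real^'n::finite \<Rightarrow> real" and e :: "real^'n"
  assumes "g differentiable (at (t *\<^sub>R e))"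
  shows "((\<lambda>\<tau>. g (\<tau> *\<^sub>R e)) has_real_derivative frechet_derivative g (at (t *\<^sub>R e)) e) (at t)"
proof -
  have g: "(g has_derivative frechet_derivative g (at (t *\<^sub>R e))) (at (t *\<^sub>R e))"
    using assms frechet_derivative_works by blast
  have "((\<lambda>\<tau>::real. \<tau> *\<^sub>R e) has_derivative (\<lambda>h. h *\<^sub>R e)) (at t)"
    by (intro derivative_eq_intros) auto
  from has_derivative_compose[OF this g]
  have "((\<lambda>\<tau>. g (\<tau> *\<^sub>R e)) has_derivative (\<lambda>h. frechet_derivative g (at (t *\<^sub>R e)) (h *\<^sub>R e))) (at t)" .
  moreover have "(\<lambda>h. frechet_derivative g (at (t *\<^sub>R e)) (h *\<^sub>R e))
      = (\<lambda>h. frechet_derivative g (at (t *\<^sub>R e)) e * h)"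
    using linear_simps(5)[OF has_derivative_bounded_linear[OF g]] by (auto simp: mult.commute)
  ultimately show ?thesis by (simp add: has_field_derivative_def)
qed

text \<open>The profile of a \<open>C\<^sup>2\<close> radial function is recovered along a coordinate axis, whose
  partial derivatives provide the first two derivatives of the profile.\<close>

lemma C2_radial_profile_derivatives:
  fixes v :: "real \<Rightarrow> real"
  assumes C2: "C2_UNIV (\<lambda>x::real^'n::finite. v (norm x))"
  obtains v1 v2 where "\<And>t. t > 0 \<Longrightarrow> (v has_real_derivative v1 t) (at t)"
    and "\<And>t. (v1 has_real_derivative v2 t) (at t)"
proof -
  let ?f = "\<lambda>x::real^'n. v (norm x)"
  fix i :: 'n
  define e where "e = (axis i 1 :: real^'n)"
  have "(v has_real_derivative partial i ?f (t *\<^sub>R e)) (at t)" if t: "t > 0" for t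
  proof -
    have "?f differentiable (at (t *\<^sub>R e))" using C2 unfolding C2_UNIV_def by blast
    from DERIV_frechet_derivative_along_line[OF this]
    have "((\<lambda>\<tau>. ?f (\<tau> *\<^sub>R e)) has_real_derivative partial i ?f (t *\<^sub>R e)) (at t)"
      unfolding partial_def e_def .
    then show ?thesis unfolding has_field_derivative_def
      by (rule has_derivative_transform_within_open[of _ _ _ _ "{0<..}"])
        (use t in \<open>auto simp: e_def norm_axis_1\<close>)
  qed
  moreover have "((\<lambda>t. partial i ?f (t *\<^sub>R e)) has_real_derivative
      partial i (partial i ?f) (t *\<^sub>R e)) (at t)" for t
  proof -
    have "partial i ?f differentiable (at (t *\<^sub>R e))" using C2 unfolding C2_UNIV_def by blast
    from DERIV_frechet_derivative_along_line[OF this] show ?thesis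
      unfolding partial_def[of i "partial i ?f"] e_def .
  qed
  ultimately show thesis by (rule that)
qed

lemma C2_radial_profile_tendsto_at_right_0:
  fixes v :: "real \<Rightarrow> real"
  assumes C2: "C2_UNIV (\<lambda>x::real^'n::finite. v (norm x))"
  shows "(v \<longlongrightarrow> v 0) (at_right 0)"
proof -
  fix i :: 'n
  define e where "e = (axis i 1 :: real^'n)"
  have "isCont (\<lambda>x::real^'n. v (norm x)) 0"
    using C2 unfolding C2_UNIV_def by (simp add: differentiable_imp_continuous_within)
  then have "((\<lambda>t. v (norm (t *\<^sub>R e))) \<longlongrightarrow> v (norm (0 *\<^sub>R e))) (at_right 0)"
    by (intro isCont_tendsto_compose[where g = "\<lambda>x::real^'n. v (norm x)"] tendsto_intros) simp
  moreover have "eventually (\<lambda>t. v (norm (t *\<^sub>R e)) = v t) (at_right 0)"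
    by (rule eventually_at_rightI[of 0 1]) (auto simp: e_def norm_axis_1)
  ultimately show ?thesis by (simp add: Lim_transform_eventually)
qed

lemma radial_pde_imp_profile_ode:
  fixes v v1 v2 :: "real \<Rightarrow> real" and m A B C :: real
  assumes pos: "\<And>t. t > 0 \<Longrightarrow> v t > 0"
    and d1: "\<And>t. t > 0 \<Longrightarrow> (v has_real_derivative v1 t) (at t)"
    and d2: "\<And>t. (v1 has_real_derivative v2 t) (at t)"
    and pde: "\<forall>x::real^'n::finite. A * laplacian (\<lambda>y. v (norm y) powr m) x + B * v (norm x)
                + C * radial_deriv (\<lambda>y. v (norm y)) x = 0"
    and t: "t > 0"
  shows "A * ((m * (m - 1) * v t powr (m - 2) * (v1 t)\<^sup>2 + m * v t powr (m - 1) * v2 t)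
           + (real CARD('n) - 1) / t * (m * v t powr (m - 1) * v1 t))
         + B * v t + C * (t * v1 t) = 0"
proof -
  define u1 where "u1 = (\<lambda>t. m * v t powr (m - 1) * v1 t)"
  have du: "((\<lambda>t. v t powr m) has_real_derivative u1 t) (at t)" if "t > 0" for t
    using DERIV_fun_powr[OF d1[OF that] pos[OF that], of m] unfolding u1_def by simp
  have du1: "(u1 has_real_derivative
      m * (m - 1) * v t powr (m - 2) * (v1 t)\<^sup>2 + m * v t powr (m - 1) * v2 t) (at t)"
  proof -
    have "((\<lambda>t. m * (v t powr (m - 1) * v1 t)) has_real_derivative
        m * ((m - 1) * v t powr (m - 1 - real 1) * v1 t * v1 t + v2 t * v t powr (m - 1))) (at t)"
      by (rule DERIV_cmult[OF DERIV_mult[OF DERIV_fun_powr[OF d1[OF t] pos[OF t]] d2]])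
    then show ?thesis unfolding u1_def by (simp add: algebra_simps power2_eq_square)
  qed
  fix i :: 'n
  define x where "x = t *\<^sub>R (axis i 1 :: real^'n)"
  have nx: "norm x = t" using t by (simp add: x_def norm_axis_1)
  then have x: "x \<noteq> 0" using t by auto
  have "laplacian (\<lambda>y. v (norm y) powr m) x
      = m * (m - 1) * v t powr (m - 2) * (v1 t)\<^sup>2 + m * v t powr (m - 1) * v2 t
        + (real CARD('n) - 1) / t * u1 t"
    using laplacian_radial[of x "\<lambda>t. v t powr m" u1, OF x du] du1 nx by simp
  moreover have "radial_deriv (\<lambda>y. v (norm y)) x = t * v1 t"
    using radial_deriv_radial[of x v, OF x] d1[OF t] nx by simp
  ultimately show ?thesis using pde[rule_format, of x] nx by (simp add: u1_def)
qed

section \<open>Comparison principles for scalar differential inequalities\<close>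

lemma DERIV_ge_imp_linear_lower_bound:
  fixes f f' :: "real \<Rightarrow> real"
  assumes d: "\<And>t. t \<ge> t0 \<Longrightarrow> (f has_real_derivative f' t) (at t)"
    and ge: "\<And>t. t \<ge> t0 \<Longrightarrow> f' t \<ge> \<delta>"
    and t: "t \<ge> t0"
  shows "f t \<ge> f t0 + \<delta> * (t - t0)"
proof (cases "t = t0")
  case False
  with t have "t0 < t" by simp
  from MVT2[OF this, of f f'] d obtain z
    where z: "t0 < z" "z < t" and eq: "f t - f t0 = (t - t0) * f' z"
    by auto
  have "(t - t0) * f' z \<ge> (t - t0) * \<delta>" using ge[of z] z by (intro mult_left_mono) auto
  with eq show ?thesis by (simp add: algebra_simps)
qed simp

lemma DERIV_pos_below_imp_stays_above:
  fixes f f' :: "real \<Rightarrow> real"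
  assumes d: "\<And>t. t \<ge> t0 \<Longrightarrow> (f has_real_derivative f' t) (at t)"
    and pos: "\<And>t. t \<ge> t0 \<Longrightarrow> f t \<le> L \<Longrightarrow> f' t > 0"
    and start: "f t0 \<ge> L" and t1: "t1 \<ge> t0"
  shows "f t1 \<ge> L"
proof (rule ccontr)
  assume "\<not> f t1 \<ge> L"
  then have ft1: "f t1 < L" by simp
  have cont: "continuous_on {t0..t1} f"
    by (rule continuous_at_imp_continuous_on) (metis atLeastAtMost_iff DERIV_isCont d)
  obtain tm where tm: "tm \<in> {t0..t1}" and min: "\<And>y. y \<in> {t0..t1} \<Longrightarrow> f tm \<le> f y"
    using continuous_attains_inf[OF compact_Icc _ cont] t1 by auto
  have ftm: "f tm < L" using min[of t1] t1 ft1 by auto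
  with start tm have tm0: "tm > t0" by (cases "tm = t0") auto
  have "f' tm > 0" using pos[of tm] tm ftm by auto
  from DERIV_pos_inc_left[OF d[of tm] this] tm obtain dd where dd: "dd > 0"
    and dec: "\<And>h. h > 0 \<Longrightarrow> h < dd \<Longrightarrow> f (tm - h) < f tm" by auto
  define h where "h = min (dd / 2) (tm - t0)"
  have h: "h > 0" "h < dd" "tm - h \<in> {t0..t1}" using dd tm0 tm unfolding h_def by auto
  with min[of "tm - h"] dec[of h] show False by simp
qed

lemma DERIV_ge_below_imp_eventually_ge:
  fixes f f' :: "real \<Rightarrow> real"
  assumes d: "\<And>t. t \<ge> t0 \<Longrightarrow> (f has_real_derivative f' t) (at t)"
    and ge: "\<And>t. t \<ge> t0 \<Longrightarrow> f t \<le> L \<Longrightarrow> f' t \<ge> \<delta>"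
    and \<delta>: "\<delta> > 0"
  shows "\<exists>t1\<ge>t0. \<forall>t\<ge>t1. f t \<ge> L"
proof -
  have "\<exists>t1\<ge>t0. f t1 \<ge> L"
  proof (rule ccontr)
    assume "\<not> ?thesis"
    then have below: "\<And>t. t \<ge> t0 \<Longrightarrow> f t < L" by (meson not_le)
    define t where "t = t0 + (L - f t0) / \<delta> + 1"
    have t: "t \<ge> t0" using below[of t0] \<delta> unfolding t_def by simp
    have "\<And>s. s \<ge> t0 \<Longrightarrow> f' s \<ge> \<delta>" using ge below by (meson less_imp_le)
    then have "f t \<ge> f t0 + \<delta> * (t - t0)"
      using DERIV_ge_imp_linear_lower_bound[OF d _ t] by blast
    also have "\<delta> * (t - t0) = (L - f t0) + \<delta>" unfolding t_def using \<delta> by (simp add: field_simps)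
    finally show False using below[OF t] \<delta> by simp
  qed
  then obtain t1 where t1: "t1 \<ge> t0" "f t1 \<ge> L" by auto
  have "f t \<ge> L" if "t \<ge> t1" for t
  proof (rule DERIV_pos_below_imp_stays_above[of t1 f f' L, OF _ _ t1(2) that])
    fix s assume s: "s \<ge> t1"
    with t1(1) show "(f has_real_derivative f' s) (at s)" by (intro d) simp
    assume "f s \<le> L"
    with s t1(1) have "f' s \<ge> \<delta>" by (intro ge) simp_all
    with \<delta> show "f' s > 0" by simp
  qed
  with t1 show ?thesis by auto
qed

lemma DERIV_pos_imp_pos_of_tendsto_0_at_right:
  fixes f f' :: "real \<Rightarrow> real"
  assumes d: "\<And>r. r > 0 \<Longrightarrow> (f has_real_derivative f' r) (at r)"
    and pos: "\<And>r. r > 0 \<Longrightarrow> f' r > 0"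
    and lim: "(f \<longlongrightarrow> 0) (at_right 0)"
    and r: "r > 0"
  shows "f r > 0"
proof -
  define r2 where "r2 = r / 2"
  have r2: "0 < r2" "r2 < r" unfolding r2_def using r by auto
  obtain z where z: "r2 < z" "z < r" and eq: "f r - f r2 = (r - r2) * f' z"
    using MVT2[OF r2(2), of f f'] d r2 by force
  have "(r - r2) * f' z > 0" using z r2 pos[of z] by simp
  moreover have "eventually (\<lambda>t. f t \<le> f r2) (at_right 0)"
  proof -
    have "eventually (\<lambda>t. t \<in> {0<..<r2}) (at_right (0::real))"
      using r2 by (intro eventually_at_right_real) auto
    then show ?thesis
    proof eventually_elim
      case (elim t)
      then have "f r2 \<ge> f t + 0 * (r2 - t)"
        using d pos by (intro DERIV_ge_imp_linear_lower_bound[of t f f']) (auto intro: less_imp_le)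
      then show ?case by simp
    qed
  qed
  then have "0 \<le> f r2" using tendsto_upperbound[OF lim] by simp
  ultimately show ?thesis using eq by linarith
qed

lemma relaxation_eventually_gt:
  fixes y w \<psi> :: "real \<Rightarrow> real"
  assumes d: "\<And>t. t \<ge> t0 \<Longrightarrow> (y has_real_derivative w t * (\<psi> t - c * y t)) (at t)"
    and w: "filterlim w at_top at_top" and \<psi>: "(\<psi> \<longlongrightarrow> L) at_top" and c: "c > 0"
    and b: "b < L / c"
  shows "eventually (\<lambda>t. b < y t) at_top"
proof -
  define \<epsilon> where "\<epsilon> = L / c - b"
  have \<epsilon>: "\<epsilon> > 0" using b unfolding \<epsilon>_def by simp
  have "eventually (\<lambda>t. \<psi> t > L - c * \<epsilon> / 4) at_top"
    using \<psi> c \<epsilon> by (intro order_tendstoD) auto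
  moreover have "eventually (\<lambda>t. w t \<ge> 1) at_top" using w by (simp add: filterlim_at_top)
  moreover have "eventually (\<lambda>t. t \<ge> t0) at_top" by simp
  ultimately have "eventually (\<lambda>t. \<psi> t > L - c * \<epsilon> / 4 \<and> w t \<ge> 1 \<and> t \<ge> t0) at_top"
    by eventually_elim auto
  then obtain s1 where s1: "\<And>t. t \<ge> s1 \<Longrightarrow> \<psi> t > L - c * \<epsilon> / 4 \<and> w t \<ge> 1 \<and> t \<ge> t0"
    by (auto simp: eventually_at_top_linorder)
  have "\<exists>t1\<ge>s1. \<forall>t\<ge>t1. y t \<ge> b + \<epsilon> / 2"
  proof (rule DERIV_ge_below_imp_eventually_ge[where \<delta> = "c * \<epsilon> / 4"])
    show "\<And>t. s1 \<le> t \<Longrightarrow> (y has_real_derivative w t * (\<psi> t - c * y t)) (at t)"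
      using d s1 by blast
    show "0 < c * \<epsilon> / 4" using c \<epsilon> by simp
    fix t assume t: "s1 \<le> t" and yt: "y t \<le> b + \<epsilon> / 2"
    have "c * y t \<le> c * (b + \<epsilon> / 2)" using yt c by (intro mult_left_mono) auto
    moreover have "L - c * \<epsilon> / 4 - c * (b + \<epsilon> / 2) = c * \<epsilon> / 4"
      unfolding \<epsilon>_def using c by (simp add: field_simps)
    ultimately have "\<psi> t - c * y t \<ge> c * \<epsilon> / 4" using s1[OF t] by linarith
    then have "w t * (\<psi> t - c * y t) \<ge> 1 * (c * \<epsilon> / 4)"
      using s1[OF t] c \<epsilon> by (intro mult_mono) auto
    then show "c * \<epsilon> / 4 \<le> w t * (\<psi> t - c * y t)" by simp
  qed
  then obtain t1 where t1: "\<And>t. t \<ge> t1 \<Longrightarrow> y t \<ge> b + \<epsilon> / 2" by blast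
  have "b < y t" if "t \<ge> t1" for t using t1[OF that] \<epsilon> by linarith
  then show ?thesis unfolding eventually_at_top_linorder by blast
qed

lemma relaxation_tendsto:
  fixes y w \<psi> :: "real \<Rightarrow> real"
  assumes d: "\<And>t. t \<ge> t0 \<Longrightarrow> (y has_real_derivative w t * (\<psi> t - c * y t)) (at t)"
    and w: "filterlim w at_top at_top" and \<psi>: "(\<psi> \<longlongrightarrow> L) at_top" and c: "c > 0"
  shows "(y \<longlongrightarrow> L / c) at_top"
proof (rule order_tendstoI)
  fix b assume "b < L / c"
  then show "eventually (\<lambda>t. b < y t) at_top" using relaxation_eventually_gt[OF d w \<psi> c] by blast
next
  fix b assume b: "L / c < b"
  have "((\<lambda>t. - y t) has_real_derivative w t * ((- \<psi> t) - c * (- y t))) (at t)" if "t \<ge> t0" for t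
    using DERIV_minus[OF d[OF that]] by (simp add: algebra_simps)
  from relaxation_eventually_gt[OF this w tendsto_minus[OF \<psi>] c, where b = "- b"] b
  show "eventually (\<lambda>t. y t < b) at_top" by simp
qed

lemma neg_quadratic_le:
  fixes \<mu> p x :: real
  assumes \<mu>: "\<mu> > 0"
  shows "- \<mu> * x\<^sup>2 - p * x \<le> p\<^sup>2 / (4 * \<mu>)"
proof -
  have "0 \<le> \<mu> * (x + p / (2 * \<mu>))\<^sup>2" using \<mu> by simp
  also have "\<mu> * (x + p / (2 * \<mu>))\<^sup>2 = \<mu> * x\<^sup>2 + p * x + p\<^sup>2 / (4 * \<mu>)"
    using \<mu> by (simp add: field_simps power2_eq_square)
  finally show ?thesis by simp
qed

lemma tendsto_div_ln_of_tendsto_mult_deriv: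
  fixes h h' :: "real \<Rightarrow> real"
  assumes d: "\<And>s. (h has_real_derivative h' s) (at s)"
    and lim: "((\<lambda>s. s * h' s) \<longlongrightarrow> C) at_top"
  shows "((\<lambda>s. h s / ln s) \<longlongrightarrow> C) at_top"
proof (rule lhospital_at_top_at_top[of ln "\<lambda>s. 1 / s" h h'])
  show "LIM x at_top. ln (x::real) :> at_top" by (rule ln_at_top)
  show "eventually (\<lambda>x. 1 / x \<noteq> (0::real)) at_top"
    using eventually_gt_at_top[of 0] by eventually_elim simp
  show "eventually (\<lambda>x. (h has_real_derivative h' x) (at x)) at_top" using d by simp
  show "eventually (\<lambda>x. (ln has_real_derivative 1 / x) (at x)) at_top"
    using eventually_gt_at_top[of 0] by eventually_elim (rule DERIV_ln_divide)
  have "eventually (\<lambda>x. x * h' x = h' x / (1 / x)) at_top"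
    using eventually_gt_at_top[of 0] by eventually_elim simp
  from Lim_transform_eventually[OF lim this] show "((\<lambda>x. h' x / (1 / x)) \<longlongrightarrow> C) at_top" .
qed

section \<open>Asymptotics of the planar system in logarithmic variables\<close>

locale log_radial_system =
  fixes w a :: "real \<Rightarrow> real" and \<mu> N c :: real
  assumes \<mu>_pos: "\<mu> > 0" and c_pos: "c > 0" and N_large: "N - 2 - 2 * \<mu> > 0"
    and w_pos: "\<And>s. w s > 0"
    and w_deriv: "\<And>s. (w has_real_derivative w s * a s) (at s)"
    and a_deriv: "\<And>s. (a has_real_derivative
          - \<mu> * (a s - 2)\<^sup>2 - (N - 2) * (a s - 2) - c * w s * a s) (at s)"
    and flux_bound: "\<And>s. c * w s > (1 + \<mu>) * (2 - a s)"
begin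

lemma a_eventually_nonneg: "\<exists>s0. \<forall>s\<ge>s0. a s \<ge> 0"
proof -
  have "2 * (N - 2 - 2 * \<mu>) \<le> - \<mu> * (a s - 2)\<^sup>2 - (N - 2) * (a s - 2) - c * w s * a s"
    if "a s \<le> 0" for s
  proof -
    define b where "b = 2 - a s"
    have b: "b \<ge> 2" using \<open>a s \<le> 0\<close> unfolding b_def by simp
    have "c * w s * (b - 2) \<ge> ((1 + \<mu>) * b) * (b - 2)"
      using flux_bound[of s] b by (intro mult_right_mono) (auto simp: b_def)
    moreover have "- \<mu> * b\<^sup>2 + (N - 2) * b + ((1 + \<mu>) * b) * (b - 2) - 2 * (N - 2 - 2 * \<mu>)
        = (b - 2) * (b + N - 2 - 2 * \<mu>)"
      by (simp add: algebra_simps power2_eq_square)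
    moreover have "(b - 2) * (b + N - 2 - 2 * \<mu>) \<ge> 0" using b N_large by simp
    moreover have "- \<mu> * (a s - 2)\<^sup>2 - (N - 2) * (a s - 2) - c * w s * a s
        = - \<mu> * b\<^sup>2 + (N - 2) * b + c * w s * (b - 2)"
      unfolding b_def by (simp add: algebra_simps power2_eq_square)
    ultimately show ?thesis by linarith
  qed
  then have "\<exists>s0\<ge>0. \<forall>s\<ge>s0. a s \<ge> 0"
    using N_large by (intro DERIV_ge_below_imp_eventually_ge[OF a_deriv]) auto
  then show ?thesis by blast
qed

lemma w_mono:
  assumes nonneg: "\<And>s. s \<ge> x \<Longrightarrow> a s \<ge> 0" and "x \<le> y"
  shows "w x \<le> w y"
  using DERIV_ge_imp_linear_lower_bound[of x w "\<lambda>s. w s * a s" 0 y] w_deriv w_pos nonneg \<open>x \<le> y\<close>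
  by (simp add: less_imp_le)

text \<open>While \<open>w\<close> stays bounded, \<open>a = 0\<close> is repelling from above: near \<open>a = 0\<close> the right-hand
  side of the equation for \<open>a\<close> is close to \<open>2 (N - 2) - 4 \<mu> > 0\<close>.\<close>

lemma a_eventually_ge_if_w_bounded:
  assumes nonneg: "\<And>s. s \<ge> s0 \<Longrightarrow> a s \<ge> 0" and bounded: "\<And>s. s \<ge> s0 \<Longrightarrow> w s \<le> W"
  obtains \<epsilon> s1 where "\<epsilon> > 0" and "s1 \<ge> s0" and "\<And>s. s \<ge> s1 \<Longrightarrow> a s \<ge> \<epsilon>"
proof -
  define K where "K = 2 * (N - 2) - 4 * \<mu>"
  have K: "K > 0" unfolding K_def using N_large by simp
  define B where "B = \<bar>4 * \<mu> - N + 2\<bar>"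
  define D where "D = \<mu> + B + c * W"
  have "W > 0" using bounded[of s0] w_pos[of s0] by simp
  then have D: "D > 0" unfolding D_def B_def using \<mu>_pos c_pos by (simp add: add_pos_nonneg)
  define \<epsilon> where "\<epsilon> = min 1 (K / (2 * D))"
  have \<epsilon>: "\<epsilon> > 0" "\<epsilon> \<le> 1" unfolding \<epsilon>_def using K D by auto
  have "\<epsilon> * D \<le> (K / (2 * D)) * D" using D unfolding \<epsilon>_def by (intro mult_right_mono) auto
  also have "\<dots> = K / 2" using D by simp
  finally have \<epsilon>D: "\<mu> * \<epsilon> + B * \<epsilon> + c * W * \<epsilon> \<le> K / 2"
    by (simp add: D_def algebra_simps)
  have "\<exists>s1\<ge>s0. \<forall>s\<ge>s1. a s \<ge> \<epsilon>"
  proof (rule DERIV_ge_below_imp_eventually_ge[OF a_deriv, of s0 _ "K / 2"])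
    show "0 < K / 2" using K by simp
    fix s assume s: "s0 \<le> s" and as: "a s \<le> \<epsilon>"
    have "\<mu> * (a s)\<^sup>2 \<le> \<mu> * \<epsilon>"
    proof -
      have "(a s)\<^sup>2 \<le> a s * 1"
        unfolding power2_eq_square using nonneg[OF s] as \<epsilon> by (intro mult_left_mono) auto
      then show ?thesis using as \<mu>_pos by (simp add: mult_left_mono)
    qed
    moreover have "(4 * \<mu> - N + 2) * a s \<ge> - (B * \<epsilon>)"
    proof -
      have "\<bar>(4 * \<mu> - N + 2) * a s\<bar> \<le> B * \<epsilon>"
        unfolding abs_mult B_def using nonneg[OF s] as by (intro mult_left_mono) auto
      then show ?thesis by linarith
    qed
    moreover have "c * w s * a s \<le> c * W * \<epsilon>"
      using c_pos w_pos[of s] bounded[OF s] nonneg[OF s] as by (intro mult_mono) auto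
    moreover have "- \<mu> * (a s - 2)\<^sup>2 - (N - 2) * (a s - 2) - c * w s * a s
        = - (\<mu> * (a s)\<^sup>2) + (4 * \<mu> - N + 2) * a s + K - c * w s * a s"
      unfolding K_def by (simp add: algebra_simps power2_eq_square)
    ultimately show "K / 2 \<le> - \<mu> * (a s - 2)\<^sup>2 - (N - 2) * (a s - 2) - c * w s * a s"
      using \<epsilon>D by linarith
  qed
  with \<epsilon> that show thesis by blast
qed

lemma w_tendsto_at_top: "filterlim w at_top at_top"
proof -
  obtain s0 where nonneg: "\<And>s. s \<ge> s0 \<Longrightarrow> a s \<ge> 0" using a_eventually_nonneg by blast
  have mono: "w x \<le> w y" if "s0 \<le> x" "x \<le> y" for x y
    using w_mono[of x y] nonneg that by simp
  show ?thesis
  proof (cases "\<exists>W. \<forall>s\<ge>s0. w s \<le> W")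
    case True
    then obtain W where W: "\<And>s. s \<ge> s0 \<Longrightarrow> w s \<le> W" by blast
    obtain \<epsilon> s1 where \<epsilon>: "\<epsilon> > 0" and s1: "s1 \<ge> s0" "\<And>s. s \<ge> s1 \<Longrightarrow> a s \<ge> \<epsilon>"
      using a_eventually_ge_if_w_bounded[OF nonneg W] by blast
    define \<delta> where "\<delta> = \<epsilon> * w s1"
    have \<delta>: "\<delta> > 0" unfolding \<delta>_def using \<epsilon> w_pos by simp
    define T where "T = s1 + W / \<delta> + 1"
    have T: "T \<ge> s1" unfolding T_def using W[of s0] w_pos[of s0] \<delta> by simp
    have "w T \<ge> w s1 + \<delta> * (T - s1)"
    proof (rule DERIV_ge_imp_linear_lower_bound[OF w_deriv _ T])
      fix s assume s: "s1 \<le> s"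
      have "\<epsilon> \<le> a s" "0 \<le> a s" using s1(2)[OF s] \<epsilon> by simp_all
      then have "\<epsilon> * w s1 \<le> a s * w s"
        using mono[of s1 s] s s1(1) w_pos[of s1] by (intro mult_mono) auto
      then show "\<delta> \<le> w s * a s" unfolding \<delta>_def by (simp add: mult.commute)
    qed
    also have "\<delta> * (T - s1) = W + \<delta>" unfolding T_def using \<delta> by (simp add: field_simps)
    finally have "w T > W" using w_pos[of s1] \<delta> by simp
    with W[of T] T s1 show ?thesis by simp
  next
    case False
    show ?thesis unfolding filterlim_at_top eventually_at_top_linorder
    proof
      fix W
      from False obtain s where s: "s \<ge> s0" "w s > W" by (auto simp: not_le)
      then have "\<forall>t\<ge>s. W \<le> w t" using mono[of s] by force
      then show "\<exists>s. \<forall>t\<ge>s. W \<le> w t" by blast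
    qed
  qed
qed

lemma a_tendsto_0: "(a \<longlongrightarrow> 0) at_top"
proof (rule order_tendstoI)
  fix e :: real assume "e < 0"
  obtain s0 where "\<forall>s\<ge>s0. a s \<ge> 0" using a_eventually_nonneg by blast
  with \<open>e < 0\<close> show "eventually (\<lambda>s. e < a s) at_top"
    unfolding eventually_at_top_linorder by force
next
  fix e :: real assume e: "0 < e"
  define G where "G = (N - 2)\<^sup>2 / (4 * \<mu>)"
  have G: "G \<ge> 0" unfolding G_def using \<mu>_pos by simp
  have "eventually (\<lambda>s. w s \<ge> (G + 1) / (c * (e / 2))) at_top"
    using w_tendsto_at_top by (simp add: filterlim_at_top)
  then obtain s2 where s2: "\<And>s. s \<ge> s2 \<Longrightarrow> w s \<ge> (G + 1) / (c * (e / 2))"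
    by (auto simp: eventually_at_top_linorder)
  have "\<exists>s1\<ge>s2. \<forall>s\<ge>s1. - a s \<ge> - (e / 2)"
  proof (rule DERIV_ge_below_imp_eventually_ge[of s2 "\<lambda>s. - a s"
        "\<lambda>s. - (- \<mu> * (a s - 2)\<^sup>2 - (N - 2) * (a s - 2) - c * w s * a s)" _ 1])
    show "((\<lambda>s. - a s) has_real_derivative
        - (- \<mu> * (a s - 2)\<^sup>2 - (N - 2) * (a s - 2) - c * w s * a s)) (at s)" for s
      by (rule DERIV_minus[OF a_deriv])
    fix s assume s: "s2 \<le> s" and as: "- a s \<le> - (e / 2)"
    have "c * w s * a s \<ge> c * ((G + 1) / (c * (e / 2))) * (e / 2)"
      using s2[OF s] as c_pos e G w_pos[of s] by (intro mult_mono) auto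
    also have "c * ((G + 1) / (c * (e / 2))) * (e / 2) = G + 1" using c_pos e by (simp add: field_simps)
    finally show "1 \<le> - (- \<mu> * (a s - 2)\<^sup>2 - (N - 2) * (a s - 2) - c * w s * a s)"
      using neg_quadratic_le[OF \<mu>_pos, where p = "N - 2" and x = "a s - 2"] unfolding G_def by linarith
  qed simp
  then obtain s1 where "\<forall>s\<ge>s1. - a s \<ge> - (e / 2)" by blast
  with e show "eventually (\<lambda>s. a s < e) at_top"
    unfolding eventually_at_top_linorder by force
qed

text \<open>\<open>P = w a\<close> satisfies the relaxation equation \<open>P' = w (\<psi> - c P)\<close> with
  \<open>\<psi> = a\<^sup>2 - \<mu> (a - 2)\<^sup>2 - (N - 2) (a - 2) \<rightarrow> 2 (N - 2) - 4 \<mu>\<close>.\<close>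

lemma wa_tendsto: "((\<lambda>s. w s * a s) \<longlongrightarrow> (2 * (N - 2) - 4 * \<mu>) / c) at_top"
proof (rule relaxation_tendsto[OF _ w_tendsto_at_top _ c_pos])
  let ?\<psi> = "\<lambda>s. (a s)\<^sup>2 - \<mu> * (a s - 2)\<^sup>2 - (N - 2) * (a s - 2)"
  show "((\<lambda>s. w s * a s) has_real_derivative w s * (?\<psi> s - c * (w s * a s))) (at s)" for s
    using DERIV_mult[OF w_deriv a_deriv, of s] by (simp add: algebra_simps power2_eq_square)
  have "(?\<psi> \<longlongrightarrow> 0\<^sup>2 - \<mu> * (0 - 2)\<^sup>2 - (N - 2) * (0 - 2)) at_top"
    by (intro tendsto_intros a_tendsto_0)
  then show "(?\<psi> \<longlongrightarrow> 2 * (N - 2) - 4 * \<mu>) at_top" by (simp add: algebra_simps)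
qed

lemma w_div_tendsto: "((\<lambda>s. w s / s) \<longlongrightarrow> (2 * (N - 2) - 4 * \<mu>) / c) at_top"
proof (rule lhospital_at_top_at_top[of "\<lambda>s. s" "\<lambda>s. 1" w "\<lambda>s. w s * a s"])
  show "((\<lambda>s. w s * a s / 1) \<longlongrightarrow> (2 * (N - 2) - 4 * \<mu>) / c) at_top"
    using wa_tendsto by simp
qed (auto simp: filterlim_ident w_deriv)

lemma w_mult_wa_deviation_tendsto:
  defines "A \<equiv> (2 * (N - 2) - 4 * \<mu>) / c"
  shows "((\<lambda>s. w s * (w s * a s - A)) \<longlongrightarrow> - (N - 2 - 4 * \<mu>) * A / c) at_top"
proof -
  define P where "P = (\<lambda>s. w s * a s)"
  define \<kappa> where "\<kappa> = N - 2 - 4 * \<mu>"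
  define \<psi> where "\<psi> = (\<lambda>s. a s * (P s - A) + P s * ((1 - \<mu>) * a s - \<kappa>))"
  have "((\<lambda>s. w s * (P s - A)) has_real_derivative w s * (\<psi> s - c * (w s * (P s - A)))) (at s)"
    for s
  proof -
    have "(P has_real_derivative w s * a s * a s
        + (- \<mu> * (a s - 2)\<^sup>2 - (N - 2) * (a s - 2) - c * w s * a s) * w s) (at s)"
      unfolding P_def by (rule DERIV_mult[OF w_deriv a_deriv])
    from DERIV_mult[OF w_deriv DERIV_diff[OF this DERIV_const]]
    have "((\<lambda>s. w s * (P s - A)) has_real_derivative w s * a s * (P s - A) + (w s * a s * a s
        + (- \<mu> * (a s - 2)\<^sup>2 - (N - 2) * (a s - 2) - c * w s * a s) * w s - 0) * w s) (at s)" .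
    moreover have "w s * a s * (P s - A) + (w s * a s * a s
        + (- \<mu> * (a s - 2)\<^sup>2 - (N - 2) * (a s - 2) - c * w s * a s) * w s - 0) * w s
        - w s * (\<psi> s - c * (w s * (P s - A))) = (w s)\<^sup>2 * (2 * (N - 2) - 4 * \<mu> - c * A)"
      unfolding \<psi>_def P_def \<kappa>_def by (simp add: algebra_simps power2_eq_square)
    moreover have "c * A = 2 * (N - 2) - 4 * \<mu>" unfolding A_def using c_pos by simp
    ultimately show ?thesis by simp
  qed
  moreover have "(\<psi> \<longlongrightarrow> 0 * (A - A) + A * ((1 - \<mu>) * 0 - \<kappa>)) at_top"
    unfolding \<psi>_def P_def A_def by (intro tendsto_intros a_tendsto_0 wa_tendsto)
  ultimately have "((\<lambda>s. w s * (P s - A)) \<longlongrightarrow> (0 * (A - A) + A * ((1 - \<mu>) * 0 - \<kappa>)) / c) at_top"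
    by (intro relaxation_tendsto[OF _ w_tendsto_at_top _ c_pos])
  then show ?thesis unfolding P_def \<kappa>_def by (simp add: algebra_simps)
qed

lemma s_mult_wa_deviation_tendsto:
  "((\<lambda>s. s * (w s * a s - (2 * (N - 2) - 4 * \<mu>) / c)) \<longlongrightarrow> - (N - 2 - 4 * \<mu>) / c) at_top"
proof -
  define A where "A = (2 * (N - 2) - 4 * \<mu>) / c"
  have A: "A > 0" unfolding A_def using N_large \<mu>_pos c_pos by simp
  have "((\<lambda>s. w s * (w s * a s - A)) \<longlongrightarrow> - (N - 2 - 4 * \<mu>) * A / c) at_top"
    using w_mult_wa_deviation_tendsto unfolding A_def .
  moreover have "((\<lambda>s. w s / s) \<longlongrightarrow> A) at_top"
    using w_div_tendsto unfolding A_def .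
  ultimately have "((\<lambda>s. w s * (w s * a s - A) / (w s / s)) \<longlongrightarrow> (- (N - 2 - 4 * \<mu>) * A / c) / A) at_top"
    using A by (intro tendsto_divide) auto
  moreover have "eventually (\<lambda>s. w s * (w s * a s - A) / (w s / s) = s * (w s * a s - A)) at_top"
    using eventually_gt_at_top[of 0]
  proof eventually_elim
    case (elim s)
    with w_pos[of s] show ?case by simp
  qed
  ultimately have "((\<lambda>s. s * (w s * a s - A)) \<longlongrightarrow> (- (N - 2 - 4 * \<mu>) * A / c) / A) at_top"
    by (rule Lim_transform_eventually)
  moreover have "(- (N - 2 - 4 * \<mu>) * A / c) / A = - (N - 2 - 4 * \<mu>) / c" using A by simp
  ultimately show ?thesis unfolding A_def by simp
qed

end

section \<open>Positive radial profiles\<close>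

locale radial_profile =
  fixes v v1 v2 :: "real \<Rightarrow> real" and m \<beta> N :: real
  assumes m_pos: "0 < m" and N_gt_2: "N > 2" and m_lt: "N * m < N - 2" and \<beta>_pos: "\<beta> > 0"
    and v_pos: "\<And>t. t \<ge> 0 \<Longrightarrow> v t > 0"
    and v_tendsto_0: "(v \<longlongrightarrow> v 0) (at_right 0)"
    and v_deriv: "\<And>t. t > 0 \<Longrightarrow> (v has_real_derivative v1 t) (at t)"
    and v1_deriv: "\<And>t. (v1 has_real_derivative v2 t) (at t)"
    and ode: "\<And>t. t > 0 \<Longrightarrow>
      (N - 1) / m * ((m * (m - 1) * v t powr (m - 2) * (v1 t)\<^sup>2 + m * v t powr (m - 1) * v2 t)
        + (N - 1) / t * (m * v t powr (m - 1) * v1 t))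
      + 2 * \<beta> / (1 - m) * v t + \<beta> * (t * v1 t) = 0"
begin

lemma m_lt_1: "m < 1"
proof -
  have "N * m < N * 1" using m_lt by simp
  with N_gt_2 show ?thesis by (simp add: mult_less_cancel_left_pos)
qed

lemma N_gt_1: "N > 1"
  using N_gt_2 by simp

definition w :: "real \<Rightarrow> real" where
  "w s = (exp s)\<^sup>2 * v (exp s) powr (1 - m)"

definition a :: "real \<Rightarrow> real" where
  "a s = 2 + (1 - m) * (exp s * v1 (exp s) / v (exp s))"

lemma w_pos: "w s > 0"
  unfolding w_def using v_pos[of "exp s"] by simp

lemma w_deriv: "(w has_real_derivative w s * a s) (at s)"
proof -
  define R where "R = exp s"
  define V where "V = v R"
  have V: "V > 0" unfolding V_def R_def using v_pos by simp
  have v_exp: "((\<lambda>s. v (exp s)) has_real_derivative v1 R * R) (at s)"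
    using DERIV_chain2[OF v_deriv DERIV_exp[of s]] unfolding R_def by simp
  have "((\<lambda>s. (exp s)\<^sup>2) has_real_derivative 2 * R * R) (at s)"
    unfolding R_def by (auto intro!: derivative_eq_intros simp: power2_eq_square)
  from DERIV_mult[OF this DERIV_fun_powr[OF v_exp, of "1 - m"]] V
  have "(w has_real_derivative 2 * R * R * V powr (1 - m)
      + R\<^sup>2 * ((1 - m) * V powr (1 - m - 1) * (v1 R * R))) (at s)"
    unfolding w_def[abs_def] V_def R_def by (simp add: ac_simps)
  moreover have "2 * R * R * V powr (1 - m) + R\<^sup>2 * ((1 - m) * V powr (1 - m - 1) * (v1 R * R))
      = (R\<^sup>2 * V powr (1 - m)) * (2 + (1 - m) * (R * v1 R / V))"
  proof -
    define Vp where "Vp = V powr (- m)"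
    have "V powr (1 - m) = V * Vp" "V powr (1 - m - 1) = Vp"
      unfolding Vp_def using V powr_add[of V 1 "- m"] by simp_all
    then show ?thesis using V by (simp add: field_simps power2_eq_square)
  qed
  ultimately show ?thesis unfolding w_def a_def R_def V_def by simp
qed

lemma a_deriv:
  "(a has_real_derivative - (m / (1 - m)) * (a s - 2)\<^sup>2 - (N - 2) * (a s - 2)
      - \<beta> / (N - 1) * w s * a s) (at s)"
proof -
  define R where "R = exp s"
  define V where "V = v R"
  have R: "R > 0" unfolding R_def by simp
  have V: "V > 0" unfolding V_def using v_pos R by simp
  have v_exp: "((\<lambda>s. v (exp s)) has_real_derivative v1 R * R) (at s)"
    using DERIV_chain2[OF v_deriv DERIV_exp[of s]] unfolding R_def by simp
  have v1_exp: "((\<lambda>s. v1 (exp s)) has_real_derivative v2 R * R) (at s)"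
    using DERIV_chain2[OF v1_deriv DERIV_exp[of s]] unfolding R_def by simp
  have "((\<lambda>s. exp s * v1 (exp s) / v (exp s)) has_real_derivative
      ((R * v1 R + R * (v2 R * R)) * V - R * v1 R * (v1 R * R)) / (V * V)) (at s)"
    using DERIV_divide[OF DERIV_mult[OF DERIV_exp v1_exp] v_exp] V
    unfolding V_def R_def by (simp add: ac_simps)
  from DERIV_add[OF DERIV_const DERIV_cmult[OF this]]
  have "(a has_real_derivative (1 - m) * (((R * v1 R + R * (v2 R * R)) * V - R * v1 R * (v1 R * R))
      / (V * V))) (at s)"
    unfolding a_def[abs_def] by simp
  moreover have "(1 - m) * (((R * v1 R + R * (v2 R * R)) * V - R * v1 R * (v1 R * R)) / (V * V))
      = - (m / (1 - m)) * (a s - 2)\<^sup>2 - (N - 2) * (a s - 2) - \<beta> / (N - 1) * w s * a s"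
  proof -
    define p where "p = R * v1 R / V"
    define T where "T = R\<^sup>2 * v2 R / V"
    define W where "W = R\<^sup>2 * V powr (1 - m)"
    have w: "w s = W" unfolding w_def W_def R_def V_def ..
    have a: "a s = 2 + (1 - m) * p" unfolding a_def p_def R_def V_def ..
    define Vm where "Vm = V powr m"
    have Vm: "Vm > 0" unfolding Vm_def using V by simp
    have powers: "V powr (m - 1) = Vm / V" "V powr (m - 2) = Vm / V\<^sup>2" "V powr (1 - m) = V / Vm"
      unfolding Vm_def using V by (simp_all add: powr_diff)
    have "(N - 1) / m * ((m * (m - 1) * (Vm / V\<^sup>2) * (v1 R)\<^sup>2 + m * (Vm / V) * v2 R)
        + (N - 1) / R * (m * (Vm / V) * v1 R)) + 2 * \<beta> / (1 - m) * V + \<beta> * (R * v1 R) = 0"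
      using ode[OF R] unfolding V_def[symmetric] powers .
    moreover have "R\<^sup>2 / Vm * ((N - 1) / m * ((m * (m - 1) * (Vm / V\<^sup>2) * (v1 R)\<^sup>2 + m * (Vm / V) * v2 R)
        + (N - 1) / R * (m * (Vm / V) * v1 R)) + 2 * \<beta> / (1 - m) * V + \<beta> * (R * v1 R))
      = (N - 1) * ((m - 1) * p\<^sup>2 + T + (N - 1) * p) + \<beta> * W * (2 / (1 - m) + p)"
      using R V Vm m_pos m_lt_1 unfolding p_def T_def W_def powers
      by (simp add: field_simps power2_eq_square)
    ultimately have "(N - 1) * ((m - 1) * p\<^sup>2 + T + (N - 1) * p) + \<beta> * W * (2 / (1 - m) + p) = 0"
      by (metis mult_zero_right)
    define c where "c = \<beta> / (N - 1)"
    have T: "T = (1 - m) * p\<^sup>2 - (N - 1) * p - c * W * (2 / (1 - m) + p)"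
      unfolding c_def
      using N_gt_1 \<open>(N - 1) * ((m - 1) * p\<^sup>2 + T + (N - 1) * p) + \<beta> * W * (2 / (1 - m) + p) = 0\<close>
      by (simp add: field_simps)
    have "(1 - m) * (((R * v1 R + R * (v2 R * R)) * V - R * v1 R * (v1 R * R)) / (V * V))
        = (1 - m) * (p + T - p\<^sup>2)"
      unfolding p_def T_def using V by (simp add: field_simps power2_eq_square)
    also have "\<dots> = - (m / (1 - m)) * (a s - 2)\<^sup>2 - (N - 2) * (a s - 2) - \<beta> / (N - 1) * w s * a s"
      unfolding T w a c_def[symmetric] using m_pos m_lt_1 by (simp add: field_simps power2_eq_square)
    finally show ?thesis .
  qed
  ultimately show ?thesis by simp
qed

text \<open>Multiplying the equation by \<open>r\<^bsup>N-1\<^esup>\<close> exhibits it as \<open>G' = \<beta> (N - 2 / (1 - m)) r\<^bsup>N-1\<^esup> v > 0\<close>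
  for the flux \<open>G\<close> below, and \<open>G(0\<^sup>+) = 0\<close>.\<close>

lemma flux_pos:
  assumes r: "r > 0"
  shows "(N - 1) * r powr (N - 1) * v r powr (m - 1) * v1 r + \<beta> * r powr N * v r > 0"
proof -
  define u1 where "u1 = (\<lambda>t. m * v t powr (m - 1) * v1 t)"
  define u2 where "u2 = (\<lambda>t. m * (m - 1) * v t powr (m - 2) * (v1 t)\<^sup>2 + m * v t powr (m - 1) * v2 t)"
  define G where "G = (\<lambda>r. (N - 1) / m * (r powr (N - 1) * u1 r) + \<beta> * (r powr N * v r))"
  define G' where "G' = (\<lambda>r. \<beta> * (N - 2 / (1 - m)) * (r powr (N - 1) * v r))"
  have "G r > 0"
  proof (rule DERIV_pos_imp_pos_of_tendsto_0_at_right[of G G', OF _ _ _ r])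
    fix r :: real assume r: "r > 0"
    have u1: "(u1 has_real_derivative u2 r) (at r)"
    proof -
      have "((\<lambda>t. m * (v t powr (m - 1) * v1 t)) has_real_derivative
          m * ((m - 1) * v r powr (m - 1 - real 1) * v1 r * v1 r + v2 r * v r powr (m - 1))) (at r)"
        using v_pos[of r] r
        by (intro DERIV_cmult DERIV_mult DERIV_fun_powr v_deriv v1_deriv) auto
      then show ?thesis unfolding u1_def u2_def by (simp add: algebra_simps power2_eq_square)
    qed
    have "((\<lambda>r. r powr (N - 1)) has_real_derivative (N - 1) * r powr (N - 2)) (at r)"
      using has_real_derivative_powr[OF r, of "N - 1"] by (simp add: algebra_simps)
    then have "(G has_real_derivative (N - 1) / m * ((N - 1) * r powr (N - 2) * u1 r
        + u2 r * r powr (N - 1)) + \<beta> * (N * r powr (N - 1) * v r + v1 r * r powr N)) (at r)"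
      unfolding G_def using r
      by (intro DERIV_add DERIV_cmult DERIV_mult has_real_derivative_powr u1 v_deriv) auto
    moreover have "(N - 1) / m * ((N - 1) * r powr (N - 2) * u1 r + u2 r * r powr (N - 1))
        + \<beta> * (N * r powr (N - 1) * v r + v1 r * r powr N) = G' r"
    proof -
      have powers: "r powr (N - 1) = r powr (N - 2) * r" "r powr N = r powr (N - 2) * r * r"
        using r powr_add[of r "N - 2" 1] powr_add[of r "N - 1" 1] by simp_all
      have "(N - 1) / m * ((N - 1) * r powr (N - 2) * u1 r + u2 r * r powr (N - 1))
          = r powr (N - 2) * r * ((N - 1) / m * (u2 r + (N - 1) / r * u1 r))"
        unfolding powers using r m_pos by (simp add: field_simps)
      also have "(N - 1) / m * (u2 r + (N - 1) / r * u1 r)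
          = - (2 * \<beta> / (1 - m) * v r + \<beta> * (r * v1 r))"
        using ode[OF r] unfolding u1_def u2_def by linarith
      finally show ?thesis unfolding G'_def powers using m_lt_1 by (simp add: field_simps)
    qed
    ultimately show "(G has_real_derivative G' r) (at r)" by simp
    have "N - 2 / (1 - m) > 0" using m_lt m_lt_1 by (simp add: field_simps)
    then show "G' r > 0" unfolding G'_def using \<beta>_pos r v_pos[of r] by simp
  next
    have powr_0: "((\<lambda>r. r powr p) \<longlongrightarrow> 0) (at_right 0)" if "p > 0" for p :: real
      using that by (intro tendsto_zero_powrI tendsto_ident_at eventually_at_rightI[of 0 1]) auto
    have "isCont v1 0" by (rule DERIV_isCont[OF v1_deriv])
    then have "(v1 \<longlongrightarrow> v1 0) (at_right 0)"
      unfolding isCont_def by (rule tendsto_within_subset) simp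
    then have "(G \<longlongrightarrow> (N - 1) / m * (0 * (m * v 0 powr (m - 1) * v1 0)) + \<beta> * (0 * v 0)) (at_right 0)"
      unfolding G_def u1_def using v_pos[of 0] N_gt_1
      by (intro tendsto_intros powr_0 v_tendsto_0) auto
    then show "(G \<longlongrightarrow> 0) (at_right 0)" by simp
  qed
  moreover have "G r = (N - 1) * r powr (N - 1) * v r powr (m - 1) * v1 r + \<beta> * r powr N * v r"
    unfolding G_def u1_def using m_pos by simp
  ultimately show ?thesis by simp
qed

lemma flux_bound: "\<beta> / (N - 1) * w s > (1 + m / (1 - m)) * (2 - a s)"
proof -
  define R where "R = exp s"
  define V where "V = v R"
  have R: "R > 0" unfolding R_def by simp
  have V: "V > 0" unfolding V_def using v_pos R by simp
  have "(N - 1) * R powr (N - 1) * V powr (m - 1) * v1 R + \<beta> * R powr N * V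
      = R powr (N - 2) * V powr m * ((N - 1) * (R * v1 R / V) + \<beta> * (R\<^sup>2 * V powr (1 - m)))"
    using R V by (simp add: powr_diff powr_add[symmetric] field_simps power2_eq_square)
  moreover have "R powr (N - 2) * V powr m > 0" using R V by simp
  ultimately have "(N - 1) * (R * v1 R / V) + \<beta> * (R\<^sup>2 * V powr (1 - m)) > 0"
    using flux_pos[OF R] unfolding V_def by (metis zero_less_mult_pos)
  then have "- (R * v1 R / V) * (N - 1) < \<beta> * (R\<^sup>2 * V powr (1 - m))"
    by (simp add: algebra_simps)
  then have "- (R * v1 R / V) < \<beta> / (N - 1) * (R\<^sup>2 * V powr (1 - m))"
    using N_gt_1 by (simp add: pos_less_divide_eq)
  moreover have "(1 + m / (1 - m)) * (2 - a s) = - (R * v1 R / V)"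
    using m_lt_1 V unfolding a_def R_def[symmetric] V_def[symmetric] by (simp add: field_simps)
  ultimately show ?thesis unfolding w_def R_def[symmetric] V_def[symmetric] by simp
qed

sublocale log_radial_system w a "m / (1 - m)" N "\<beta> / (N - 1)"
proof
  show "N - 2 - 2 * (m / (1 - m)) > 0" using m_lt m_lt_1 by (simp add: field_simps)
qed (use m_pos m_lt_1 \<beta>_pos N_gt_1 w_pos w_deriv a_deriv flux_bound in auto)

end

theorem lemma2p3:
  fixes v :: "real \<Rightarrow> real" and m \<beta> lam :: real
    and w h :: "real \<Rightarrow> real"
  defines "n \<equiv> real CARD('n::finite)"
  assumes n3: "CARD('n) \<ge> 3"
    and m_pos: "0 < m" and m_lt: "m < (n - 2) / n" and m_ne: "m \<noteq> (n - 2) / (n + 2)"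
    and beta_pos: "\<beta> > 0" and lambda_pos: "lam > 0"
    and v_pos: "\<forall>r\<ge>0. v r > 0"
    and v0: "v 0 = lam"
    and C2: "C2_UNIV (\<lambda>x::real^'n. v (norm x))"
    and pde: "\<forall>x::real^'n.
       (n - 1) / m * laplacian (\<lambda>y. v (norm y) powr m) x
       + 2 * \<beta> / (1 - m) * v (norm x)
       + \<beta> * radial_deriv (\<lambda>y. v (norm y)) x = 0"
    and w_def: "\<forall>s. w s = (exp s)\<^sup>2 * v (exp s) powr (1 - m)"
    and h_def: "\<forall>s. h s = w s - 2 * (n - 1) * (n - 2 - n * m) / ((1 - m) * \<beta>) * s"
  shows "((\<lambda>s. h s / ln s) \<longlongrightarrow> - (n - 1) * (n - 2 - (n + 2) * m) / ((1 - m) * \<beta>)) at_top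
       \<and> ((\<lambda>s. s * deriv h s) \<longlongrightarrow> - (n - 1) * (n - 2 - (n + 2) * m) / ((1 - m) * \<beta>)) at_top"
proof -
  have n: "n > 2" using n3 unfolding n_def by simp
  then have "n * m < n - 2" using m_lt by (simp add: field_simps)
  moreover obtain v1 v2 where d1: "\<And>t. t > 0 \<Longrightarrow> (v has_real_derivative v1 t) (at t)"
    and d2: "\<And>t. (v1 has_real_derivative v2 t) (at t)"
    using C2_radial_profile_derivatives[OF C2] by blast
  moreover note radial_pde_imp_profile_ode[OF _ d1 d2 pde, unfolded n_def[symmetric]]
  ultimately interpret profile: radial_profile v v1 v2 m \<beta> n
    using n m_pos beta_pos v_pos C2_radial_profile_tendsto_at_right_0[OF C2] by unfold_locales auto
  define A where "A = 2 * (n - 1) * (n - 2 - n * m) / ((1 - m) * \<beta>)"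
  define C where "C = - (n - 1) * (n - 2 - (n + 2) * m) / ((1 - m) * \<beta>)"
  have w_eq: "w = profile.w" using w_def by (auto simp: profile.w_def)
  have "(2 * (n - 2) - 4 * (m / (1 - m))) / (\<beta> / (n - 1)) = A"
    "- (n - 2 - 4 * (m / (1 - m))) / (\<beta> / (n - 1)) = C"
    unfolding A_def C_def using profile.m_lt_1 n beta_pos by (simp_all add: field_simps)
  then have lim: "((\<lambda>s. s * (w s * profile.a s - A)) \<longlongrightarrow> C) at_top"
    using profile.s_mult_wa_deviation_tendsto unfolding w_eq by simp
  have "h = (\<lambda>s. w s - A * s)" using h_def unfolding A_def by auto
  then have dh: "(h has_real_derivative w s * profile.a s - A) (at s)" for s
    using DERIV_diff[OF profile.w_deriv DERIV_cmult[OF DERIV_ident, of A]] unfolding w_eq by simp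
  have "((\<lambda>s. s * deriv h s) \<longlongrightarrow> C) at_top"
    using lim by (simp add: DERIV_imp_deriv[OF dh])
  with tendsto_div_ln_of_tendsto_mult_deriv[OF dh lim] show ?thesis unfolding C_def by simp
qed

end
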